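(* For every $1$-cycle $\gamma\in C_1^{BM}(\Gamma)$ (i.e. $d\gamma=0$) and every choice of bijections $\alpha=\{\alpha_x\}_{x\in X}$, the operator $U_\gamma=U^{(\alpha)}_\gamma$ is unitary and $U_\gamma-1\in C^*(X)$.
   Context: Let $\Gamma$ be a connected, locally finite graph with vertex set $X$ and edge set $\Gamma^1$, edges oriented from $s(e)$ to $t(e)$, and $X$ with the path metric (edges of length $1$). Fix a separable infinite-dimensional Hilbert space $H$. The Roe algebra $C^*(X)$ is the norm closure of the $*$-algebra of locally compact (i.e. $TM_f$, $M_fT$ compact for every finitely supported $f$, $M_f$ multiplication by $f$) finite-propagation (there is $R$ with $M_fTM_g=0$ whenever the supports of $f,g$ are at distance $>R$) operators on $\ell^2(X)\otimes H$. $C_1^{BM}(\Gamma)$ is the group of formal sums $\gamma=\sum_{e\in\Gamma^1}\gamma_e e$, $\gamma_e\in\mathbb Z$, and $d(e)=t(e)-s(e)$. Construction of $U_\gamma$: after reversing the orientation of each edge with $\gamma_e<0$ (and replacing $\gamma_e$ by $-\gamma_e$), assume all $\gamma_e\ge0$. Let $G$ be the oriented multigraph with vertex set $X$ in which each edge $e$ of $\Gamma$ is replaced by $\gamma_e$ parallel edges from $s(e)$ to $t(e)$. For $x\in X$ let $I(x)=\{e\in G^1:t(e)=x\}$ and $O(x)=\{e\in G^1:s(e)=x\}$; $d\gamma=0$ means $|I(x)|=|O(x)|$ for all $x$, and we fix bijections $\alpha_x:I(x)\to O(x)$. Fix an orthonormal basis of $H$ containing vectors $\varepsilon_e$, $e\in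 G^1$ (possibly together with further basis vectors $\eta$). Define $F:X\times G^1\to X\times G^1$ by $F(x,e)=(t(\alpha_x(e)),\alpha_x(e))$ if $t(e)=x$ and $F(x,e)=(x,e)$ otherwise, and define $U_\gamma$ on $\ell^2(X)\otimes H$ by $U_\gamma(\delta_x\otimes\varepsilon_e)=\delta_{y}\otimes\varepsilon_{e'}$ where $(y,e')=F(x,e)$, and $U_\gamma(\delta_x\otimes\eta)=\delta_x\otimes\eta$ for the remaining basis vectors $\eta$. *)

theory Defs
  imports "HOL-Analysis.Analysis"
begin

text \<open>Vertices are the elements of type 'v (so X = UNIV), edges the elements of type 'e,
  with source map s and target map t.\<close>

definition locally_finite_graph :: "('e \<Rightarrow> 'v) \<Rightarrow> ('e \<Rightarrow> 'v) \<Rightarrow> bool" where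
  "locally_finite_graph s t \<longleftrightarrow> (\<forall>x. finite {e. s e = x \<or> t e = x})"

definition adj_rel :: "('e \<Rightarrow> 'v) \<Rightarrow> ('e \<Rightarrow> 'v) \<Rightarrow> ('v \<times> 'v) set" where
  "adj_rel s t = {(x, y). \<exists>e. (s e = x \<and> t e = y) \<or> (s e = y \<and> t e = x)}"

definition connected_graph :: "('e \<Rightarrow> 'v) \<Rightarrow> ('e \<Rightarrow> 'v) \<Rightarrow> bool" where
  "connected_graph s t \<longleftrightarrow> (\<forall>x y. (x, y) \<in> (adj_rel s t)\<^sup>*)"

definition gdist :: "('e \<Rightarrow> 'v) \<Rightarrow> ('e \<Rightarrow> 'v) \<Rightarrow> 'v \<Rightarrow> 'v \<Rightarrow> nat" where
  "gdist s t x y = (LEAST n. (x, y) \<in> (adj_rel s t) ^^ n)"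

text \<open>A 1-chain is an arbitrary (not necessarily finitely supported) integer function on edges.
  Its boundary: (d gamma)(x) = sum over edges into x minus sum over edges out of x.\<close>
definition boundary :: "('e \<Rightarrow> 'v) \<Rightarrow> ('e \<Rightarrow> 'v) \<Rightarrow> ('e \<Rightarrow> int) \<Rightarrow> 'v \<Rightarrow> int" where
  "boundary s t \<gamma> x = (\<Sum>e\<in>{e. t e = x}. \<gamma> e) - (\<Sum>e\<in>{e. s e = x}. \<gamma> e)"

definition is_cycle :: "('e \<Rightarrow> 'v) \<Rightarrow> ('e \<Rightarrow> 'v) \<Rightarrow> ('e \<Rightarrow> int) \<Rightarrow> bool" where
  "is_cycle s t \<gamma> \<longleftrightarrow> (\<forall>x. boundary s t \<gamma> x = 0)"

definition G1 :: "('e \<Rightarrow> int) \<Rightarrow> ('e \<times> nat) set" where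
  "G1 \<gamma> = {(e, k). k < nat \<bar>\<gamma> e\<bar>}"

definition Gsrc :: "('e \<Rightarrow> 'v) \<Rightarrow> ('e \<Rightarrow> 'v) \<Rightarrow> ('e \<Rightarrow> int) \<Rightarrow> 'e \<times> nat \<Rightarrow> 'v" where
  "Gsrc s t \<gamma> g = (if \<gamma> (fst g) \<ge> 0 then s (fst g) else t (fst g))"

definition Gtgt :: "('e \<Rightarrow> 'v) \<Rightarrow> ('e \<Rightarrow> 'v) \<Rightarrow> ('e \<Rightarrow> int) \<Rightarrow> 'e \<times> nat \<Rightarrow> 'v" where
  "Gtgt s t \<gamma> g = (if \<gamma> (fst g) \<ge> 0 then t (fst g) else s (fst g))"

definition Iset :: "('e \<Rightarrow> 'v) \<Rightarrow> ('e \<Rightarrow> 'v) \<Rightarrow> ('e \<Rightarrow> int) \<Rightarrow> 'v \<Rightarrow> ('e \<times> nat) set" where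
  "Iset s t \<gamma> x = {g \<in> G1 \<gamma>. Gtgt s t \<gamma> g = x}"

definition Oset :: "('e \<Rightarrow> 'v) \<Rightarrow> ('e \<Rightarrow> 'v) \<Rightarrow> ('e \<Rightarrow> int) \<Rightarrow> 'v \<Rightarrow> ('e \<times> nat) set" where
  "Oset s t \<gamma> x = {g \<in> G1 \<gamma>. Gsrc s t \<gamma> g = x}"

text \<open>H = l^2(nat) with its standard orthonormal basis; l^2(X) \<otimes> H is identified with
  l^2(X \<times> nat), delta_x \<otimes> delta_n corresponding to the point mass at (x,n).\<close>

type_synonym 'v vec = "'v \<times> nat \<Rightarrow> complex"
type_synonym 'v op = "'v vec \<Rightarrow> 'v vec"

definition is_l2 :: "'v vec \<Rightarrow> bool" where
  "is_l2 f \<longleftrightarrow> (\<lambda>i. (cmod (f i))\<^sup>2) summable_on UNIV"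

definition l2norm :: "'v vec \<Rightarrow> real" where
  "l2norm f = sqrt (infsum (\<lambda>i. (cmod (f i))\<^sup>2) UNIV)"

definition l2inner :: "'v vec \<Rightarrow> 'v vec \<Rightarrow> complex" where
  "l2inner f g = infsum (\<lambda>i. f i * cnj (g i)) UNIV"

definition bounded_op :: "'v op \<Rightarrow> bool" where
  "bounded_op T \<longleftrightarrow>
     (\<forall>f. is_l2 f \<longrightarrow> is_l2 (T f)) \<and>
     (\<forall>f g c. is_l2 f \<longrightarrow> is_l2 g \<longrightarrow> T (\<lambda>i. c * f i + g i) = (\<lambda>i. c * T f i + T g i)) \<and>
     (\<exists>C. \<forall>f. is_l2 f \<longrightarrow> l2norm (T f) \<le> C * l2norm f)"

definition opnorm :: "'v op \<Rightarrow> real" where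
  "opnorm T = Sup {l2norm (T f) | f. is_l2 f \<and> l2norm f \<le> 1}"

definition op_diff :: "'v op \<Rightarrow> 'v op \<Rightarrow> 'v op" where
  "op_diff S T = (\<lambda>f i. S f i - T f i)"

definition unitary_op :: "'v op \<Rightarrow> bool" where
  "unitary_op U \<longleftrightarrow> bounded_op U \<and>
     (\<exists>V. bounded_op V \<and>
        (\<forall>f g. is_l2 f \<longrightarrow> is_l2 g \<longrightarrow> l2inner (U f) g = l2inner f (V g)) \<and>
        (\<forall>f. is_l2 f \<longrightarrow> V (U f) = f) \<and>
        (\<forall>f. is_l2 f \<longrightarrow> U (V f) = f))"

definition compact_op :: "'v op \<Rightarrow> bool" where
  "compact_op T \<longleftrightarrow> bounded_op T \<and>
     (\<forall>(f :: nat \<Rightarrow> 'v vec) B. (\<forall>n. is_l2 (f n) \<and> l2norm (f n) \<le> B) \<longrightarrow>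
        (\<exists>r g. strict_mono r \<and> is_l2 g \<and>
              (\<lambda>n. l2norm (\<lambda>i. T (f (r n)) i - g i)) \<longlonglongrightarrow> 0))"

definition mult_op :: "('v \<Rightarrow> complex) \<Rightarrow> 'v op" where
  "mult_op \<phi> = (\<lambda>f (x, n). \<phi> x * f (x, n))"

definition locally_compact_op :: "'v op \<Rightarrow> bool" where
  "locally_compact_op T \<longleftrightarrow>
     (\<forall>\<phi>. finite {x. \<phi> x \<noteq> 0} \<longrightarrow> compact_op (T \<circ> mult_op \<phi>) \<and> compact_op (mult_op \<phi> \<circ> T))"

definition finite_propagation_op :: "('e \<Rightarrow> 'v) \<Rightarrow> ('e \<Rightarrow> 'v) \<Rightarrow> 'v op \<Rightarrow> bool" where
  "finite_propagation_op s t T \<longleftrightarrow>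
     (\<exists>R::nat. \<forall>\<phi> \<psi>. bounded (range \<phi>) \<longrightarrow> bounded (range \<psi>) \<longrightarrow>
        (\<forall>x y. \<phi> x \<noteq> 0 \<longrightarrow> \<psi> y \<noteq> 0 \<longrightarrow> gdist s t x y > R) \<longrightarrow>
        (\<forall>f. is_l2 f \<longrightarrow> mult_op \<phi> (T (mult_op \<psi> f)) = (\<lambda>_. 0)))"

definition roe_algebra :: "('e \<Rightarrow> 'v) \<Rightarrow> ('e \<Rightarrow> 'v) \<Rightarrow> 'v op set" where
  "roe_algebra s t = {T. bounded_op T \<and>
     (\<forall>\<epsilon>>0. \<exists>S. bounded_op S \<and> locally_compact_op S \<and> finite_propagation_op s t S \<and>
        opnorm (op_diff T S) < \<epsilon>)}"

text \<open>eps is an injection of G^1 into the standard basis index set nat of H (the basis vectors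
  epsilon_e); the remaining standard basis vectors play the role of the eta's.\<close>
definition Fmap :: "('e \<Rightarrow> 'v) \<Rightarrow> ('e \<Rightarrow> 'v) \<Rightarrow> ('e \<Rightarrow> int) \<Rightarrow> ('v \<Rightarrow> 'e \<times> nat \<Rightarrow> 'e \<times> nat)
                    \<Rightarrow> ('e \<times> nat \<Rightarrow> nat) \<Rightarrow> 'v \<times> nat \<Rightarrow> 'v \<times> nat" where
  "Fmap s t \<gamma> \<alpha> \<epsilon> p =
     (let x = fst p; n = snd p in
      if n \<in> \<epsilon> ` G1 \<gamma> then
        (let g = inv_into (G1 \<gamma>) \<epsilon> n in
         if Gtgt s t \<gamma> g = x then (Gtgt s t \<gamma> (\<alpha> x g), \<epsilon> (\<alpha> x g)) else (x, n))
      else (x, n))"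

text \<open>U_gamma sends the basis vector at p to the basis vector at Fmap p, extended linearly:
  (U f)(q) = sum of f over the preimage of q.\<close>
definition U_gamma :: "('e \<Rightarrow> 'v) \<Rightarrow> ('e \<Rightarrow> 'v) \<Rightarrow> ('e \<Rightarrow> int) \<Rightarrow> ('v \<Rightarrow> 'e \<times> nat \<Rightarrow> 'e \<times> nat)
                    \<Rightarrow> ('e \<times> nat \<Rightarrow> nat) \<Rightarrow> 'v op" where
  "U_gamma s t \<gamma> \<alpha> \<epsilon> = (\<lambda>f q. infsum f {p. Fmap s t \<gamma> \<alpha> \<epsilon> p = q})"

end

theory Submission
  imports Defs "HOL-Combinatorics.Permutations"
begin

text \<open>The map F underlying U_gamma permutes the index set X \<times> \<nat> of the standard basis: on the
  basis vectors delta_t(g) \<otimes> epsilon_g it acts as the permutation g \<mapsto> alpha_t(g)(g) of the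
  edges of G, and it fixes every other basis vector. Hence U_gamma is a permutation operator, so
  unitary. Moreover F moves a basis vector at most one step along an edge, and over any finite
  set of vertices it moves only finitely many basis vectors, because the graph is locally finite.
  The first property gives U_gamma - 1 propagation at most 1; the second makes U_gamma - 1
  locally compact, since cut down by a finitely supported multiplication operator it involves
  only finitely many coordinates. So U_gamma - 1 lies in the dense subalgebra of the Roe
  algebra itself.\<close>

lemma l2_finite_support:
  assumes "finite S" "\<And>q. q \<notin> S \<Longrightarrow> f q = 0"
  shows "is_l2 f" "l2norm f = sqrt (\<Sum>q\<in>S. (cmod (f q))\<^sup>2)"
proof -
  have "(\<lambda>i. (cmod (f i))\<^sup>2) summable_on UNIV \<longleftrightarrow> (\<lambda>i. (cmod (f i))\<^sup>2) summable_on S"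
    by (rule summable_on_cong_neutral) (use assms in auto)
  then show "is_l2 f" using assms unfolding is_l2_def by simp
  have "infsum (\<lambda>i. (cmod (f i))\<^sup>2) UNIV = infsum (\<lambda>i. (cmod (f i))\<^sup>2) S"
    by (rule infsum_cong_neutral) (use assms in auto)
  then show "l2norm f = sqrt (\<Sum>q\<in>S. (cmod (f q))\<^sup>2)" using assms unfolding l2norm_def by simp
qed

lemma l2norm_nonneg: "l2norm f \<ge> 0"
  unfolding l2norm_def by (intro real_sqrt_ge_zero infsum_nonneg) auto

lemma norm_le_l2norm:
  assumes "is_l2 f"
  shows "cmod (f p) \<le> l2norm f"
proof -
  have "infsum (\<lambda>i. (cmod (f i))\<^sup>2) {p} \<le> infsum (\<lambda>i. (cmod (f i))\<^sup>2) UNIV"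
    by (rule infsum_mono_neutral) (use assms in \<open>auto simp: is_l2_def\<close>)
  then show ?thesis unfolding l2norm_def by (simp add: real_le_rsqrt)
qed

lemma l2_comp_bij:
  assumes "bij \<sigma>"
  shows "is_l2 (\<lambda>q. f (\<sigma> q)) \<longleftrightarrow> is_l2 f" "l2norm (\<lambda>q. f (\<sigma> q)) = l2norm f"
  unfolding is_l2_def l2norm_def
  using summable_on_reindex_bij_betw[OF assms, of "\<lambda>i. (cmod (f i))\<^sup>2"]
    infsum_reindex_bij_betw[OF assms, of "\<lambda>i. (cmod (f i))\<^sup>2"] by auto

lemma norm_diff_squared_le: "(cmod (a - b))\<^sup>2 \<le> 2 * (cmod a)\<^sup>2 + 2 * (cmod b)\<^sup>2"
proof -
  have "(cmod (a - b))\<^sup>2 \<le> (cmod a + cmod b)\<^sup>2"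
    by (intro power_mono norm_triangle_ineq4) auto
  also have "\<dots> \<le> 2 * (cmod a)\<^sup>2 + 2 * (cmod b)\<^sup>2"
    using sum_squares_ge_zero[of "cmod a - cmod b" 0] by (simp add: power2_eq_square algebra_simps)
  finally show ?thesis .
qed

lemma l2_diff:
  assumes "is_l2 f" "is_l2 g"
  shows "is_l2 (\<lambda>i. f i - g i)" "l2norm (\<lambda>i. f i - g i) \<le> 2 * (l2norm f + l2norm g)"
proof -
  let ?a = "\<lambda>i. (cmod (f i))\<^sup>2" and ?b = "\<lambda>i. (cmod (g i))\<^sup>2"
    and ?d = "\<lambda>i. (cmod (f i - g i))\<^sup>2"
  have sa: "?a summable_on UNIV" and sb: "?b summable_on UNIV"
    using assms by (auto simp: is_l2_def)
  have sab: "(\<lambda>i. 2 * ?a i + 2 * ?b i) summable_on UNIV"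
    by (intro summable_on_add summable_on_cmult_right sa sb)
  have sd: "?d summable_on UNIV"
    by (rule summable_on_comparison_test[OF sab]) (auto simp: norm_diff_squared_le)
  then show "is_l2 (\<lambda>i. f i - g i)" by (simp add: is_l2_def)
  define A B where "A = infsum ?a UNIV" and "B = infsum ?b UNIV"
  have AB: "A \<ge> 0" "B \<ge> 0" unfolding A_def B_def by (auto intro: infsum_nonneg)
  have "infsum ?d UNIV \<le> infsum (\<lambda>i. 2 * ?a i + 2 * ?b i) UNIV"
    by (rule infsum_mono[OF sd sab]) (simp add: norm_diff_squared_le)
  also have "\<dots> = 2 * A + 2 * B"
    using sa sb by (simp add: A_def B_def infsum_add summable_on_cmult_right infsum_cmult_right)
  also have "\<dots> \<le> (2 * (sqrt A + sqrt B))\<^sup>2"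
  proof -
    have "(2 * (sqrt A + sqrt B))\<^sup>2 = 4 * ((sqrt A)\<^sup>2 + (sqrt B)\<^sup>2 + 2 * sqrt A * sqrt B)"
      by (simp add: power_mult_distrib power2_sum)
    moreover have "sqrt A * sqrt B \<ge> 0" using AB by simp
    ultimately show ?thesis using AB by simp
  qed
  finally show "l2norm (\<lambda>i. f i - g i) \<le> 2 * (l2norm f + l2norm g)"
    unfolding l2norm_def A_def[symmetric] B_def[symmetric] using AB by (intro real_le_lsqrt) auto
qed

lemma bounded_op_id: "bounded_op id"
  unfolding bounded_op_def by (auto intro: exI[of _ 1])

lemma bounded_op_diff:
  assumes "bounded_op S" "bounded_op T"
  shows "bounded_op (op_diff S T)"
proof -
  obtain C D where C: "\<And>f. is_l2 f \<Longrightarrow> l2norm (S f) \<le> C * l2norm f"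
    and D: "\<And>f. is_l2 f \<Longrightarrow> l2norm (T f) \<le> D * l2norm f"
    using assms unfolding bounded_op_def by blast
  have l2: "is_l2 (S f)" "is_l2 (T f)" if "is_l2 f" for f
    using assms that unfolding bounded_op_def by blast+
  have "l2norm (op_diff S T f) \<le> (2 * (C + D)) * l2norm f" if "is_l2 f" for f
  proof -
    have "l2norm (op_diff S T f) \<le> 2 * (l2norm (S f) + l2norm (T f))"
      unfolding op_diff_def using l2_diff(2) l2 that by blast
    also have "\<dots> \<le> 2 * (C * l2norm f + D * l2norm f)"
      using C D that by (intro mult_left_mono add_mono) auto
    finally show ?thesis by (simp add: algebra_simps)
  qed
  moreover have "op_diff S T (\<lambda>i. c * f i + g i) = (\<lambda>i. c * op_diff S T f i + op_diff S T g i)"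
    if "is_l2 f" "is_l2 g" for f g c
    using assms that unfolding bounded_op_def op_diff_def by (simp add: algebra_simps)
  ultimately show ?thesis
    unfolding bounded_op_def op_diff_def using l2 l2_diff(1) by blast
qed

lemma opnorm_diff_self: "opnorm (op_diff T T) = 0"
proof -
  have "is_l2 (\<lambda>_. 0)" "l2norm (\<lambda>_. 0) = 0"
    using l2_finite_support[of "{}" "\<lambda>_. 0"] by simp_all
  then have "{l2norm (op_diff T T f) | f. is_l2 f \<and> l2norm f \<le> 1} = {0}"
    unfolding op_diff_def by force
  then show ?thesis unfolding opnorm_def by simp
qed

lemma convergent_subseq_on_finite:
  fixes h :: "nat \<Rightarrow> 'a \<Rightarrow> complex"
  assumes "finite S" "\<And>n q. cmod (h n q) \<le> B"
  shows "\<exists>r g. strict_mono r \<and> (\<forall>q\<in>S. (\<lambda>n. h (r n) q) \<longlonglongrightarrow> g q)"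
  using assms
proof (induction S arbitrary: h rule: finite_induct)
  case empty
  then show ?case by (intro exI[of _ id]) (auto simp: strict_mono_def)
next
  case (insert a S)
  obtain r1 g1 where r1: "strict_mono r1" "\<forall>q\<in>S. (\<lambda>n. h (r1 n) q) \<longlonglongrightarrow> g1 q"
    using insert by blast
  have "bounded (range (\<lambda>n. h (r1 n) a))"
    using insert.prems by (auto simp: bounded_iff)
  then obtain l r2 where r2: "strict_mono r2" "((\<lambda>n. h (r1 n) a) \<circ> r2) \<longlonglongrightarrow> l"
    using bounded_imp_convergent_subsequence by blast
  have "(\<lambda>n. h ((r1 \<circ> r2) n) q) \<longlonglongrightarrow> (g1(a := l)) q" if "q \<in> insert a S" for q
  proof (cases "q = a")
    case False
    then have "((\<lambda>n. h (r1 n) q) \<circ> r2) \<longlonglongrightarrow> g1 q"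
      using LIMSEQ_subseq_LIMSEQ r1 r2 that by blast
    then show ?thesis using False by (simp add: o_def)
  qed (use r2 in \<open>simp add: o_def\<close>)
  moreover have "strict_mono (r1 \<circ> r2)" using r1 r2 strict_mono_o by blast
  ultimately show ?case by blast
qed

lemma compact_op_finite_support:
  fixes W :: "'v op"
  assumes S: "finite S"
    and zero: "\<And>f q. q \<notin> S \<Longrightarrow> W f q = 0"
    and pointwise: "\<And>f q. is_l2 f \<Longrightarrow> cmod (W f q) \<le> K * l2norm f"
    and lin: "\<And>f g c. W (\<lambda>i. c * f i + g i) = (\<lambda>i. c * W f i + W g i)"
  shows "compact_op W"
proof -
  have l2W: "is_l2 (W f)" and normW: "l2norm (W f) = sqrt (\<Sum>q\<in>S. (cmod (W f q))\<^sup>2)" for f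
    using l2_finite_support[OF S, of "W f"] zero by blast+
  have "l2norm (W f) \<le> (sqrt (card S) * \<bar>K\<bar>) * l2norm f" if "is_l2 f" for f
  proof -
    have "cmod (W f q) \<le> \<bar>K\<bar> * l2norm f" for q
      by (rule order_trans[OF pointwise[OF that] mult_right_mono]) (simp_all add: l2norm_nonneg)
    then have "(\<Sum>q\<in>S. (cmod (W f q))\<^sup>2) \<le> (\<Sum>q\<in>S. (\<bar>K\<bar> * l2norm f)\<^sup>2)"
      by (intro sum_mono power_mono) auto
    also have "\<dots> = (sqrt (card S) * \<bar>K\<bar> * l2norm f)\<^sup>2"
      by (simp add: power_mult_distrib)
    finally show ?thesis
      unfolding normW using l2norm_nonneg[of f] by (intro real_le_lsqrt) auto
  qed
  then have "bounded_op W" unfolding bounded_op_def using l2W lin by blast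
  moreover have "\<exists>r g. strict_mono r \<and> is_l2 g \<and> (\<lambda>n. l2norm (\<lambda>i. W (f (r n)) i - g i)) \<longlonglongrightarrow> 0"
    if f: "\<forall>n. is_l2 (f n) \<and> l2norm (f n) \<le> B" for f :: "nat \<Rightarrow> 'v vec" and B
  proof -
    have "cmod (W (f n) q) \<le> \<bar>K\<bar> * B" for n q
    proof -
      have "cmod (W (f n) q) \<le> \<bar>K\<bar> * l2norm (f n)"
        using pointwise f l2norm_nonneg by (meson abs_ge_self mult_right_mono order_trans)
      also have "\<dots> \<le> \<bar>K\<bar> * B" using f by (intro mult_left_mono) auto
      finally show ?thesis .
    qed
    then obtain r g where r: "strict_mono r" "\<forall>q\<in>S. (\<lambda>n. W (f (r n)) q) \<longlonglongrightarrow> g q"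
      using convergent_subseq_on_finite[OF S, of "\<lambda>n. W (f n)"] by blast
    define g' where "g' q = (if q \<in> S then g q else 0)" for q
    have outside: "q \<notin> S \<Longrightarrow> W (f (r n)) q - g' q = 0" for n q using zero by (simp add: g'_def)
    have "(\<lambda>n. W (f (r n)) q - g' q) \<longlonglongrightarrow> 0" if "q \<in> S" for q
      using r(2) that by (simp add: g'_def LIM_zero)
    then have "(\<lambda>n. sqrt (\<Sum>q\<in>S. (cmod (W (f (r n)) q - g' q))\<^sup>2)) \<longlonglongrightarrow> sqrt (\<Sum>q\<in>S. (cmod 0)\<^sup>2)"
      by (intro tendsto_real_sqrt tendsto_sum tendsto_power tendsto_norm) auto
    then have "(\<lambda>n. l2norm (\<lambda>i. W (f (r n)) i - g' i)) \<longlonglongrightarrow> 0"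
      using l2_finite_support(2)[OF S outside] by simp
    moreover have "is_l2 g'" using l2_finite_support[OF S, of g'] by (auto simp: g'_def)
    ultimately show ?thesis using r by blast
  qed
  ultimately show ?thesis unfolding compact_op_def by blast
qed

section \<open>Permutation operators\<close>

definition perm_op :: "('v \<times> nat \<Rightarrow> 'v \<times> nat) \<Rightarrow> 'v op" where
  "perm_op \<sigma> f = (\<lambda>q. f (\<sigma> q))"

lemma bounded_op_perm_op: "bij \<sigma> \<Longrightarrow> bounded_op (perm_op \<sigma>)"
  unfolding bounded_op_def perm_op_def by (auto simp: l2_comp_bij intro!: exI[of _ "1::real"])

lemma unitary_op_perm_op:
  fixes \<sigma> :: "'v \<times> nat \<Rightarrow> 'v \<times> nat"
  assumes "bij \<sigma>"
  shows "unitary_op (perm_op \<sigma>)"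
  unfolding unitary_op_def
proof (intro conjI exI[of _ "perm_op (inv \<sigma>)"] bounded_op_perm_op allI impI)
  show "bij \<sigma>" "bij (inv \<sigma>)" using assms bij_imp_bij_inv by blast+
  fix f g :: "'v vec"
  have "l2inner (perm_op \<sigma> f) g = infsum (\<lambda>i. f (\<sigma> i) * cnj (g i)) UNIV"
    by (simp add: l2inner_def perm_op_def)
  also have "\<dots> = infsum (\<lambda>j. f (\<sigma> (inv \<sigma> j)) * cnj (g (inv \<sigma> j))) UNIV"
    using infsum_reindex_bij_betw[OF \<open>bij (inv \<sigma>)\<close>, of "\<lambda>i. f (\<sigma> i) * cnj (g i)"] by simp
  also have "\<dots> = l2inner f (perm_op (inv \<sigma>) g)"
    using assms by (simp add: l2inner_def perm_op_def bij_is_surj surj_f_inv_f)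
  finally show "l2inner (perm_op \<sigma> f) g = l2inner f (perm_op (inv \<sigma>) g)" .
  show "perm_op (inv \<sigma>) (perm_op \<sigma> f) = f" "perm_op \<sigma> (perm_op (inv \<sigma>) f) = f"
    using assms by (simp_all add: perm_op_def bij_is_inj bij_is_surj surj_f_inv_f)
qed

lemma infsum_fibres_eq_perm_op:
  fixes F :: "'v \<times> nat \<Rightarrow> 'v \<times> nat"
  assumes "bij F"
  shows "(\<lambda>f q. infsum f {p. F p = q}) = perm_op (inv F)"
proof (intro ext)
  fix f :: "'v vec" and q
  have "{p. F p = q} = {inv F q}" using assms by (auto simp: bij_inv_eq_iff)
  then show "infsum f {p. F p = q} = perm_op (inv F) f q" by (simp add: perm_op_def)
qed

lemma perm_op_diff_id: "op_diff (perm_op \<sigma>) id f q = f (\<sigma> q) - f q"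
  by (simp add: op_diff_def perm_op_def)

lemma mult_op_apply: "mult_op \<phi> f q = \<phi> (fst q) * f q"
  by (cases q) (simp add: mult_op_def)

lemma gdist_le_1: "(x, y) \<in> adj_rel s t \<or> x = y \<Longrightarrow> gdist s t x y \<le> 1"
  unfolding gdist_def by (metis Least_le One_nat_def le_SucI relpow_0_I relpow_1)

lemma finite_propagation_perm_op_diff_id:
  fixes s t :: "'e \<Rightarrow> 'v" and \<sigma> :: "'v \<times> nat \<Rightarrow> 'v \<times> nat"
  assumes adj: "\<And>p. \<sigma> p \<noteq> p \<Longrightarrow> (fst p, fst (\<sigma> p)) \<in> adj_rel s t"
  shows "finite_propagation_op s t (op_diff (perm_op \<sigma>) id)"
  unfolding finite_propagation_op_def
proof (intro exI[of _ "1::nat"] allI impI ext)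
  fix \<phi> \<psi> :: "'v \<Rightarrow> complex" and f :: "'v vec" and q
  assume far: "\<forall>x y. \<phi> x \<noteq> 0 \<longrightarrow> \<psi> y \<noteq> 0 \<longrightarrow> 1 < gdist s t x y"
  show "mult_op \<phi> (op_diff (perm_op \<sigma>) id (mult_op \<psi> f)) q = 0"
  proof (cases "\<sigma> q = q")
    case False
    have near: "\<phi> (fst q) = 0 \<or> \<psi> y = 0" if "gdist s t (fst q) y \<le> 1" for y
      using far that by (meson not_le)
    have "gdist s t (fst q) (fst (\<sigma> q)) \<le> 1"
      by (rule gdist_le_1) (use adj[OF False] in blast)
    moreover have "gdist s t (fst q) (fst q) \<le> 1" by (rule gdist_le_1) simp
    ultimately have "\<phi> (fst q) = 0 \<or> (\<psi> (fst (\<sigma> q)) = 0 \<and> \<psi> (fst q) = 0)"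
      using near by blast
    then show ?thesis by (auto simp: mult_op_apply perm_op_diff_id)
  qed (simp add: mult_op_apply perm_op_diff_id)
qed

lemma locally_compact_perm_op_diff_id:
  fixes \<sigma> :: "'v \<times> nat \<Rightarrow> 'v \<times> nat"
  assumes "bij \<sigma>"
    and moved: "\<And>A. finite A \<Longrightarrow> finite {p. fst p \<in> A \<and> \<sigma> p \<noteq> p}"
  shows "locally_compact_op (op_diff (perm_op \<sigma>) id)"
  unfolding locally_compact_op_def
proof (intro allI impI conjI)
  let ?D = "op_diff (perm_op \<sigma>) id"
  fix \<phi> :: "'v \<Rightarrow> complex"
  assume fin: "finite {x. \<phi> x \<noteq> 0}"
  define K where "K = (\<Sum>x | \<phi> x \<noteq> 0. cmod (\<phi> x))"
  define M where "M = {p. fst p \<in> {x. \<phi> x \<noteq> 0} \<and> \<sigma> p \<noteq> p}"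
  have "finite M" unfolding M_def using moved fin by blast
  then have S: "finite (M \<union> \<sigma> -` M)"
    using assms(1) by (simp add: bij_is_inj finite_vimageI)
  have K: "cmod (\<phi> y) \<le> K" for y
    unfolding K_def using fin by (cases "\<phi> y = 0") (auto intro: sum_nonneg member_le_sum)
  have K0: "K \<ge> 0" unfolding K_def by (simp add: sum_nonneg)
  have pointwise: "cmod (f (\<sigma> q)) + cmod (f q) \<le> 2 * l2norm f" if "is_l2 f" for f q
    using norm_le_l2norm[OF that, of "\<sigma> q"] norm_le_l2norm[OF that, of q] by linarith
  have outside: "\<phi> (fst q) = 0 \<and> \<phi> (fst (\<sigma> q)) = 0" if "q \<notin> M \<union> \<sigma> -` M" "\<sigma> q \<noteq> q" for q
    using that assms(1) unfolding M_def by (auto dest: bij_is_inj injD)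
  show "compact_op (?D \<circ> mult_op \<phi>)"
  proof (rule compact_op_finite_support[OF S, where K = "2 * K"])
    fix f q
    show "q \<notin> M \<union> \<sigma> -` M \<Longrightarrow> (?D \<circ> mult_op \<phi>) f q = 0"
      using outside[of q] by (cases "\<sigma> q = q") (auto simp: perm_op_diff_id mult_op_apply)
    assume "is_l2 f"
    have "cmod ((?D \<circ> mult_op \<phi>) f q) \<le> cmod (\<phi> (fst (\<sigma> q))) * cmod (f (\<sigma> q)) + cmod (\<phi> (fst q)) * cmod (f q)"
      by (simp add: perm_op_diff_id mult_op_apply norm_mult[symmetric] norm_triangle_ineq4)
    also have "\<dots> \<le> K * (cmod (f (\<sigma> q)) + cmod (f q))"
      using K by (simp add: distrib_left add_mono mult_right_mono)
    also have "\<dots> \<le> 2 * K * l2norm f"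
      using mult_left_mono[OF pointwise[OF \<open>is_l2 f\<close>] K0] by (simp add: algebra_simps)
    finally show "cmod ((?D \<circ> mult_op \<phi>) f q) \<le> 2 * K * l2norm f" .
  qed (simp add: perm_op_diff_id mult_op_apply fun_eq_iff algebra_simps)
  show "compact_op (mult_op \<phi> \<circ> ?D)"
  proof (rule compact_op_finite_support[OF S, where K = "2 * K"])
    fix f q
    show "q \<notin> M \<union> \<sigma> -` M \<Longrightarrow> (mult_op \<phi> \<circ> ?D) f q = 0"
      using outside[of q] by (cases "\<sigma> q = q") (auto simp: perm_op_diff_id mult_op_apply)
    assume "is_l2 f"
    have "cmod ((mult_op \<phi> \<circ> ?D) f q) \<le> cmod (\<phi> (fst q)) * (cmod (f (\<sigma> q)) + cmod (f q))"
      by (simp add: perm_op_diff_id mult_op_apply norm_mult mult_left_mono norm_triangle_ineq4)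
    also have "\<dots> \<le> 2 * K * l2norm f"
      using mult_mono[OF K[of "fst q"] pointwise[of f q, OF \<open>is_l2 f\<close>] K0 add_nonneg_nonneg[OF norm_ge_zero norm_ge_zero]]
      by (simp add: algebra_simps)
    finally show "cmod ((mult_op \<phi> \<circ> ?D) f q) \<le> 2 * K * l2norm f" .
  qed (simp add: perm_op_diff_id mult_op_apply fun_eq_iff algebra_simps)
qed

lemma perm_op_diff_id_in_roe_algebra:
  fixes s t :: "'e \<Rightarrow> 'v" and \<sigma> :: "'v \<times> nat \<Rightarrow> 'v \<times> nat"
  assumes "bij \<sigma>"
    and "\<And>p. \<sigma> p \<noteq> p \<Longrightarrow> (fst p, fst (\<sigma> p)) \<in> adj_rel s t"
    and "\<And>A. finite A \<Longrightarrow> finite {p. fst p \<in> A \<and> \<sigma> p \<noteq> p}"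
  shows "op_diff (perm_op \<sigma>) id \<in> roe_algebra s t"
proof -
  have "bounded_op (op_diff (perm_op \<sigma>) id)"
    using assms(1) by (intro bounded_op_diff bounded_op_perm_op bounded_op_id)
  moreover have "locally_compact_op (op_diff (perm_op \<sigma>) id)"
    using assms(1,3) by (rule locally_compact_perm_op_diff_id)
  moreover have "finite_propagation_op s t (op_diff (perm_op \<sigma>) id)"
    using assms(2) by (rule finite_propagation_perm_op_diff_id)
  ultimately show ?thesis
    unfolding roe_algebra_def
    by (auto intro!: exI[of _ "op_diff (perm_op \<sigma>) id"] simp: opnorm_diff_self)
qed

section \<open>The permutation underlying U_gamma\<close>

locale cycle_matching =
  fixes s t :: "'e \<Rightarrow> 'v" and \<gamma> :: "'e \<Rightarrow> int"
    and \<alpha> :: "'v \<Rightarrow> 'e \<times> nat \<Rightarrow> 'e \<times> nat" and \<epsilon> :: "'e \<times> nat \<Rightarrow> nat"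
  assumes \<alpha>_bij: "\<And>x. bij_betw (\<alpha> x) (Iset s t \<gamma> x) (Oset s t \<gamma> x)"
    and \<epsilon>_inj: "inj_on \<epsilon> (G1 \<gamma>)"
begin

abbreviation "F \<equiv> Fmap s t \<gamma> \<alpha> \<epsilon>"

definition slot :: "'e \<times> nat \<Rightarrow> 'v \<times> nat" where
  "slot g = (Gtgt s t \<gamma> g, \<epsilon> g)"

definition next_edge :: "'e \<times> nat \<Rightarrow> 'e \<times> nat" where
  "next_edge g = \<alpha> (Gtgt s t \<gamma> g) g"

lemma next_edge_in_G1: "g \<in> G1 \<gamma> \<Longrightarrow> next_edge g \<in> G1 \<gamma>"
  and Gsrc_next_edge: "g \<in> G1 \<gamma> \<Longrightarrow> Gsrc s t \<gamma> (next_edge g) = Gtgt s t \<gamma> g"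
  using bij_betwE[OF \<alpha>_bij] unfolding next_edge_def Iset_def Oset_def by blast+

lemma bij_betw_next_edge: "bij_betw next_edge (G1 \<gamma>) (G1 \<gamma>)"
proof (rule bij_betw_imageI)
  show "inj_on next_edge (G1 \<gamma>)"
  proof (rule inj_onI)
    fix g g' assume g: "g \<in> G1 \<gamma>" "g' \<in> G1 \<gamma>" and eq: "next_edge g = next_edge g'"
    define x where "x = Gtgt s t \<gamma> g"
    have "Gtgt s t \<gamma> g' = x" using Gsrc_next_edge g eq by (metis x_def)
    then have "g \<in> Iset s t \<gamma> x" "g' \<in> Iset s t \<gamma> x" using g by (auto simp: Iset_def x_def)
    then show "g = g'"
      using eq bij_betw_imp_inj_on[OF \<alpha>_bij] \<open>Gtgt s t \<gamma> g' = x\<close>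
      unfolding next_edge_def x_def by (metis inj_onD)
  qed
  show "next_edge ` G1 \<gamma> = G1 \<gamma>"
  proof (intro subset_antisym image_subsetI next_edge_in_G1 subsetI)
    fix g' assume "g' \<in> G1 \<gamma>"
    then have "g' \<in> \<alpha> (Gsrc s t \<gamma> g') ` Iset s t \<gamma> (Gsrc s t \<gamma> g')"
      using bij_betw_imp_surj_on[OF \<alpha>_bij] by (simp add: Oset_def)
    then show "g' \<in> next_edge ` G1 \<gamma>"
      unfolding next_edge_def Iset_def by (auto intro: rev_image_eqI)
  qed
qed

lemma Fmap_slot: "g \<in> G1 \<gamma> \<Longrightarrow> F (slot g) = slot (next_edge g)"
  unfolding Fmap_def slot_def next_edge_def using \<epsilon>_inj by (simp add: Let_def)

lemma Fmap_not_slot: "p \<notin> slot ` G1 \<gamma> \<Longrightarrow> F p = p"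
  using \<epsilon>_inj unfolding Fmap_def slot_def
  by (cases p) (auto simp: Let_def image_iff)

lemma Fmap_permutes: "F permutes slot ` G1 \<gamma>"
proof (rule bij_imp_permutes[OF _ Fmap_not_slot])
  have slot: "bij_betw slot (G1 \<gamma>) (slot ` G1 \<gamma>)"
    using \<epsilon>_inj by (auto simp: bij_betw_def inj_on_def slot_def)
  have "bij_betw (slot \<circ> next_edge) (G1 \<gamma>) (slot ` G1 \<gamma>)"
    by (rule bij_betw_trans[OF bij_betw_next_edge slot])
  then have "bij_betw (F \<circ> slot) (G1 \<gamma>) (slot ` G1 \<gamma>)"
    by (rule bij_betw_cong[THEN iffD1, rotated]) (simp add: Fmap_slot)
  then show "bij_betw F (slot ` G1 \<gamma>) (slot ` G1 \<gamma>)"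
    using bij_betw_comp_iff[OF slot] by blast
qed

lemma Fmap_moves_along_edge:
  assumes "F p \<noteq> p"
  shows "(fst p, fst (F p)) \<in> adj_rel s t"
proof -
  obtain g where g: "g \<in> G1 \<gamma>" "p = slot g" using assms Fmap_not_slot by blast
  then have "fst p = Gsrc s t \<gamma> (next_edge g)" "fst (F p) = Gtgt s t \<gamma> (next_edge g)"
    using Fmap_slot[OF g(1)] by (simp_all add: Gsrc_next_edge slot_def)
  then show ?thesis unfolding adj_rel_def Gsrc_def Gtgt_def
    by (cases "0 \<le> \<gamma> (fst (next_edge g))") auto
qed

lemma finite_Fmap_moved:
  assumes "locally_finite_graph s t" "finite A"
  shows "finite {p. fst p \<in> A \<and> F p \<noteq> p}"
proof -
  let ?E = "\<Union>x\<in>A. {e. s e = x \<or> t e = x}"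
  have "finite ?E" using assms unfolding locally_finite_graph_def by blast
  moreover have "{g \<in> G1 \<gamma>. Gtgt s t \<gamma> g \<in> A} \<subseteq> Sigma ?E (\<lambda>e. {..<nat \<bar>\<gamma> e\<bar>})"
    unfolding G1_def Gtgt_def by (auto split: if_splits)
  ultimately have "finite {g \<in> G1 \<gamma>. Gtgt s t \<gamma> g \<in> A}"
    by (meson finite_SigmaI finite_lessThan finite_subset)
  moreover have "{p. fst p \<in> A \<and> F p \<noteq> p} \<subseteq> slot ` {g \<in> G1 \<gamma>. Gtgt s t \<gamma> g \<in> A}"
    using Fmap_not_slot by (force simp: slot_def)
  ultimately show ?thesis using finite_subset by blast
qed

end

theorem mainTheorem4:
  fixes s t :: "'e \<Rightarrow> 'v"
    and \<gamma> :: "'e \<Rightarrow> int"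
    and \<alpha> :: "'v \<Rightarrow> 'e \<times> nat \<Rightarrow> 'e \<times> nat"
    and \<epsilon> :: "'e \<times> nat \<Rightarrow> nat"
  assumes "connected_graph s t"
    and "locally_finite_graph s t"
    and "is_cycle s t \<gamma>"
    and "\<forall>x. bij_betw (\<alpha> x) (Iset s t \<gamma> x) (Oset s t \<gamma> x)"
    and "inj_on \<epsilon> (G1 \<gamma>)"
  shows "unitary_op (U_gamma s t \<gamma> \<alpha> \<epsilon>) \<and>
         op_diff (U_gamma s t \<gamma> \<alpha> \<epsilon>) id \<in> roe_algebra s t"
proof -
  txt \<open>The cycle condition only serves to make the bijections alpha_x exist.\<close>
  interpret cycle_matching s t \<gamma> \<alpha> \<epsilon> using assms by unfold_locales auto
  have perm: "F permutes slot ` G1 \<gamma>" by (rule Fmap_permutes)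
  have U: "U_gamma s t \<gamma> \<alpha> \<epsilon> = perm_op (inv F)"
    unfolding U_gamma_def using infsum_fibres_eq_perm_op[OF permutes_bij[OF perm]] .
  have inv_fixed: "inv F p = p \<longleftrightarrow> F p = p" for p
    by (rule permutes_inv_eq[OF perm])
  have "(fst p, fst (inv F p)) \<in> adj_rel s t" if "inv F p \<noteq> p" for p
    using Fmap_moves_along_edge[of "inv F p"] that permutes_inverses(1)[OF perm]
    unfolding adj_rel_def by auto
  then have "op_diff (perm_op (inv F)) id \<in> roe_algebra s t"
    using permutes_bij[OF permutes_inv[OF perm]] finite_Fmap_moved[OF assms(2)]
    by (intro perm_op_diff_id_in_roe_algebra) (simp_all add: inv_fixed)
  then show ?thesis
    using U unitary_op_perm_op[OF permutes_bij[OF permutes_inv[OF perm]]] by simp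
qed

end
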